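(* Let $(M,g)$ be an FRW space-time with comoving vector $u$, $H=\dot a/a$, mimetic field $\phi=t$ (so $u_k=-\nabla_k\phi$, $\chi:=\square\phi=-3H$), let $\gamma$ be a constant and $\zeta(t),V(t)$ smooth functions such that the tensor $$X_{kl}=g_{kl}\big[V+\gamma\nabla_p\chi\nabla^p\phi\big]+2\zeta\nabla_k\phi\nabla_l\phi-\gamma\big[\nabla_k\phi\nabla_l\chi+\nabla_k\chi\nabla_l\phi\big]$$ is divergence-free. Then $X_{kl}=2(\zeta+3\gamma\dot H)u_ku_l+(V+3\gamma\dot H)g_{kl}$, and the tensor $$\mathscr C_{kl}=2(\zeta+3\gamma\dot H)u_ku_l+\frac13(2\zeta-V+3\gamma\dot H)g_{kl}$$ is a Codazzi tensor with $X_{kl}=\mathscr C_{kl}-g_{kl}\mathscr C^r{}_r$. Hence the field equations $R_{kl}-\frac12Rg_{kl}=T_{kl}+X_{kl}$ are Cotton gravity equations in Codazzi form.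
   Context: FRW space-time: $ds^2=-dt^2+a(t)^2g^\star_{\mu\nu}(\mathbf x)dx^\mu dx^\nu$ with $g^\star$ a 3-dimensional Riemannian metric of constant curvature, $a>0$, $H=\dot a/a$, $u=\partial_t$ ($u_k=-\nabla_kt$), dot $=d/dt$, $\square=\nabla^k\nabla_k$. A symmetric tensor $\mathscr C$ is Codazzi if $\nabla_j\mathscr C_{kl}=\nabla_k\mathscr C_{jl}$. *)

theory Defs
  imports "HOL-Analysis.Analysis"
begin

(* Local coordinate calculus on an open set of real^'n.
   Tensors are given by their covariant components (all indices down). *)

definition pd :: "(real^'n \<Rightarrow> real) \<Rightarrow> 'n \<Rightarrow> real^'n \<Rightarrow> real" where
  "pd f i x = deriv (\<lambda>s. f (x + s *\<^sub>R axis i 1)) 0"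

fun pds :: "'n list \<Rightarrow> (real^'n \<Rightarrow> real) \<Rightarrow> real^'n \<Rightarrow> real" where
  "pds [] f = f"
| "pds (i # is) f = pd (pds is f) i"

definition smooth_on :: "(real^'n) set \<Rightarrow> (real^'n \<Rightarrow> real) \<Rightarrow> bool" where
  "smooth_on S f \<longleftrightarrow> (\<forall>is. pds is f differentiable_on S)"

definition smooth_on_real :: "real set \<Rightarrow> (real \<Rightarrow> real) \<Rightarrow> bool" where
  "smooth_on_real I f \<longleftrightarrow> (\<forall>n. (deriv ^^ n) f differentiable_on I)"

type_synonym 'n metric = "real^'n \<Rightarrow> 'n \<Rightarrow> 'n \<Rightarrow> real"

definition ginv :: "('n::finite) metric \<Rightarrow> real^'n \<Rightarrow> 'n \<Rightarrow> 'n \<Rightarrow> real" where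
  "ginv g x i j = matrix_inv (\<chi> a b. g x a b) $ i $ j"

definition christoffel :: "('n::finite) metric \<Rightarrow> real^'n \<Rightarrow> 'n \<Rightarrow> 'n \<Rightarrow> 'n \<Rightarrow> real" where
  "christoffel g x k i j = (1/2) * (\<Sum>l\<in>UNIV. ginv g x k l *
      (pd (\<lambda>y. g y j l) i x + pd (\<lambda>y. g y i l) j x - pd (\<lambda>y. g y i j) l x))"

definition grad :: "(real^'n \<Rightarrow> real) \<Rightarrow> real^'n \<Rightarrow> 'n \<Rightarrow> real" where
  "grad f x k = pd f k x"

definition cov1 :: "('n::finite) metric \<Rightarrow> (real^'n \<Rightarrow> 'n \<Rightarrow> real) \<Rightarrow> real^'n \<Rightarrow> 'n \<Rightarrow> 'n \<Rightarrow> real" where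
  "cov1 g w x j k = pd (\<lambda>y. w y k) j x - (\<Sum>m\<in>UNIV. christoffel g x m j k * w x m)"

definition cov2 :: "('n::finite) metric \<Rightarrow> (real^'n \<Rightarrow> 'n \<Rightarrow> 'n \<Rightarrow> real) \<Rightarrow> real^'n \<Rightarrow> 'n \<Rightarrow> 'n \<Rightarrow> 'n \<Rightarrow> real" where
  "cov2 g T x j k l = pd (\<lambda>y. T y k l) j x
      - (\<Sum>m\<in>UNIV. christoffel g x m j k * T x m l)
      - (\<Sum>m\<in>UNIV. christoffel g x m j l * T x k m)"

definition box :: "('n::finite) metric \<Rightarrow> (real^'n \<Rightarrow> real) \<Rightarrow> real^'n \<Rightarrow> real" where
  "box g f x = (\<Sum>j\<in>UNIV. \<Sum>k\<in>UNIV. ginv g x j k * cov1 g (grad f) x j k)"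

definition div2 :: "('n::finite) metric \<Rightarrow> (real^'n \<Rightarrow> 'n \<Rightarrow> 'n \<Rightarrow> real) \<Rightarrow> real^'n \<Rightarrow> 'n \<Rightarrow> real" where
  "div2 g T x l = (\<Sum>j\<in>UNIV. \<Sum>k\<in>UNIV. ginv g x j k * cov2 g T x j k l)"

definition trace2 :: "('n::finite) metric \<Rightarrow> (real^'n \<Rightarrow> 'n \<Rightarrow> 'n \<Rightarrow> real) \<Rightarrow> real^'n \<Rightarrow> real" where
  "trace2 g T x = (\<Sum>k\<in>UNIV. \<Sum>l\<in>UNIV. ginv g x k l * T x k l)"

definition codazzi_on :: "(real^'n) set \<Rightarrow> ('n::finite) metric \<Rightarrow> (real^'n \<Rightarrow> 'n \<Rightarrow> 'n \<Rightarrow> real) \<Rightarrow> bool" where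
  "codazzi_on S g C \<longleftrightarrow> (\<forall>x\<in>S. \<forall>k l. C x k l = C x l k) \<and>
     (\<forall>x\<in>S. \<forall>j k l. cov2 g C x j k l = cov2 g C x k j l)"

(* Riemann tensor R^r_{kij}, with R(d_i,d_j) d_k = sum_r R^r_{kij} d_r *)
definition riem :: "('n::finite) metric \<Rightarrow> real^'n \<Rightarrow> 'n \<Rightarrow> 'n \<Rightarrow> 'n \<Rightarrow> 'n \<Rightarrow> real" where
  "riem g x r k i j = pd (\<lambda>y. christoffel g y r j k) i x - pd (\<lambda>y. christoffel g y r i k) j x
     + (\<Sum>m\<in>UNIV. christoffel g x r i m * christoffel g x m j k
                 - christoffel g x r j m * christoffel g x m i k)"

definition ricci :: "('n::finite) metric \<Rightarrow> real^'n \<Rightarrow> 'n \<Rightarrow> 'n \<Rightarrow> real" where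
  "ricci g x j k = (\<Sum>i\<in>UNIV. riem g x i k i j)"

definition scal :: "('n::finite) metric \<Rightarrow> real^'n \<Rightarrow> real" where
  "scal g x = (\<Sum>j\<in>UNIV. \<Sum>k\<in>UNIV. ginv g x j k * ricci g x j k)"

definition einstein :: "('n::finite) metric \<Rightarrow> real^'n \<Rightarrow> 'n \<Rightarrow> 'n \<Rightarrow> real" where
  "einstein g x k l = ricci g x k l - scal g x / 2 * g x k l"

definition const_curv_riemannian :: "(real^'n) set \<Rightarrow> ('n::finite) metric \<Rightarrow> bool" where
  "const_curv_riemannian U h \<longleftrightarrow> open U \<and>
     (\<forall>i j. smooth_on U (\<lambda>y. h y i j)) \<and>
     (\<forall>y\<in>U. \<forall>i j. h y i j = h y j i) \<and>
     (\<forall>y\<in>U. \<forall>v::real^'n. v \<noteq> 0 \<longrightarrow> (\<Sum>i\<in>UNIV. \<Sum>j\<in>UNIV. h y i j * v$i * v$j) > 0) \<and>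
     (\<exists>K. \<forall>y\<in>U. \<forall>i j k l.
        (\<Sum>r\<in>UNIV. h y l r * riem h y r k i j) = K * (h y j k * h y i l - h y i k * h y j l))"

(* FRW space-time in comoving coordinates (t, x^1, x^2, x^3);
   spacetime index None = time, Some i = spatial index i *)
definition tcoord :: "real^(3 option) \<Rightarrow> real" where
  "tcoord x = x $ None"

definition spat :: "real^(3 option) \<Rightarrow> real^3" where
  "spat x = (\<chi> i. x $ Some i)"

definition frw_metric :: "(real \<Rightarrow> real) \<Rightarrow> 3 metric \<Rightarrow> (3 option) metric" where
  "frw_metric a gs x i j =
     (case (i, j) of (None, None) \<Rightarrow> -1
       | (Some p, Some q) \<Rightarrow> (a (tcoord x))\<^sup>2 * gs (spat x) p q
       | _ \<Rightarrow> 0)"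

definition frw_domain :: "real set \<Rightarrow> (real^3) set \<Rightarrow> (real^(3 option)) set" where
  "frw_domain I U = {x. tcoord x \<in> I \<and> spat x \<in> U}"

definition hubble :: "(real \<Rightarrow> real) \<Rightarrow> real \<Rightarrow> real" where
  "hubble a t = deriv a t / a t"

definition cotton_codazzi_form :: "(real^'n) set \<Rightarrow> ('n::finite) metric \<Rightarrow> (real^'n \<Rightarrow> 'n \<Rightarrow> 'n \<Rightarrow> real) \<Rightarrow> bool" where
  "cotton_codazzi_form S g T \<longleftrightarrow> (\<exists>C. codazzi_on S g C \<and>
     (\<forall>x\<in>S. \<forall>k l. einstein g x k l = T x k l + C x k l - g x k l * trace2 g C x))"

end

theory Submission imports Defs begin

text \<open>In comoving coordinates \<open>u = -dt\<close>, the Christoffel symbols with upper time index are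
  \<open>\<Gamma>\<^sup>t\<^sub>j\<^sub>k = H (g\<^sub>j\<^sub>k + u\<^sub>j u\<^sub>k)\<close> and \<open>\<box>t = -3H\<close>, so \<open>X\<close> is a perfect-fluid tensor
  \<open>A u\<^sub>k u\<^sub>l + B g\<^sub>k\<^sub>l\<close> with \<open>A = 2(\<zeta> + 3\<gamma>H')\<close> and \<open>B = V + 3\<gamma>H'\<close>.
  For such a tensor \<open>\<nabla>\<^sub>jT\<^sub>k\<^sub>l - \<nabla>\<^sub>kT\<^sub>j\<^sub>l = (B' + A H)(u\<^sub>k g\<^sub>j\<^sub>l - u\<^sub>j g\<^sub>k\<^sub>l)\<close>, and the time
  component of \<open>\<nabla>\<^sup>kT\<^sub>k\<^sub>l\<close> is \<open>B' - A' - 3AH\<close>. Conservation of \<open>X\<close> is therefore exactly the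
  Codazzi condition for \<open>C = A u\<^sub>k u\<^sub>l + (A - B)/3 g\<^sub>k\<^sub>l\<close>, and \<open>X = C - g tr C\<close> because
  \<open>tr C = -A + 4(A - B)/3\<close>.\<close>

section \<open>Derivatives in coordinates\<close>

definition has_pd :: "(real^'n \<Rightarrow> real) \<Rightarrow> 'n \<Rightarrow> real^'n \<Rightarrow> real \<Rightarrow> bool" where
  "has_pd f i x D \<longleftrightarrow> ((\<lambda>s. f (x + s *\<^sub>R axis i 1)) has_real_derivative D) (at 0)"

lemma pd_eqI: "has_pd f i x D \<Longrightarrow> pd f i x = D"
  unfolding has_pd_def pd_def by (rule DERIV_imp_deriv)

lemma has_pd_const: "has_pd (\<lambda>y. c) i x 0"
  unfolding has_pd_def by simp

lemma has_pd_add: "has_pd f i x D \<Longrightarrow> has_pd g i x E \<Longrightarrow> has_pd (\<lambda>y. f y + g y) i x (D + E)"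
  unfolding has_pd_def by (rule DERIV_add)

lemma has_pd_mult:
  "has_pd f i x D \<Longrightarrow> has_pd g i x E \<Longrightarrow> has_pd (\<lambda>y. f y * g y) i x (D * g x + f x * E)"
  unfolding has_pd_def by (drule (1) DERIV_mult) (simp add: mult.commute)

lemma pd_const [simp]: "pd (\<lambda>y. c) i x = 0"
  using pd_eqI[OF has_pd_const] .

lemma eventually_line_in_open:
  assumes "open S" "x \<in> S"
  shows "\<forall>\<^sub>F s in nhds 0. x + s *\<^sub>R axis i 1 \<in> (S::(real^'n) set)"
proof -
  obtain e where e: "e > 0" "ball x e \<subseteq> S" using assms open_contains_ball by blast
  have "dist s 0 < e \<Longrightarrow> x + s *\<^sub>R axis i 1 \<in> S" for s :: real
    using e(2) by (auto simp: dist_norm norm_axis_1)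
  then show ?thesis unfolding eventually_nhds_metric using e(1) by blast
qed

lemma pd_cong_open:
  assumes "open S" "x \<in> S" "\<forall>y\<in>S. f y = f' y"
  shows "pd f i x = pd f' i x"
  unfolding pd_def
  by (rule deriv_cong_ev)
    (use eventually_line_in_open[OF assms(1,2), of i] assms(3) in \<open>auto elim: eventually_mono\<close>)

lemma cov2_cong_open:
  assumes "open S" "x \<in> S" "\<forall>y\<in>S. T y = T' y"
  shows "cov2 g T x j k l = cov2 g T' x j k l"
proof -
  have "pd (\<lambda>y. T y k l) j x = pd (\<lambda>y. T' y k l) j x"
    by (rule pd_cong_open[OF assms(1,2)]) (simp add: assms(3))
  then show ?thesis
    using assms(2,3) unfolding cov2_def by simp
qed

lemma div2_cong_open:
  assumes "open S" "x \<in> S" "\<forall>y\<in>S. T y = T' y"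
  shows "div2 g T x l = div2 g T' x l"
  unfolding div2_def using cov2_cong_open[OF assms] by simp

lemma smooth_on_real_DERIV:
  assumes "smooth_on_real I f" "open I" "t \<in> I"
  shows "((deriv ^^ n) f has_real_derivative (deriv ^^ Suc n) f t) (at t)"
proof -
  have "(deriv ^^ n) f differentiable_on I"
    using assms(1) unfolding smooth_on_real_def by blast
  then have "(deriv ^^ n) f differentiable at t"
    using assms(2,3) by (simp add: differentiable_on_eq_differentiable_at)
  then show ?thesis by (simp add: DERIV_deriv_iff_real_differentiable)
qed

section \<open>Inverse metric and Christoffel symbols\<close>

lemma matrix_inv_mult:
  fixes M :: "real^'n^'n"
  assumes "invertible M"
  shows "M ** matrix_inv M = mat 1" "matrix_inv M ** M = mat 1"
proof -
  have "M ** matrix_inv M = mat 1 \<and> matrix_inv M ** M = mat 1"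
    using assms unfolding invertible_def matrix_inv_def by (rule someI_ex)
  then show "M ** matrix_inv M = mat 1" "matrix_inv M ** M = mat 1" by simp_all
qed

context
  fixes g :: "('n::finite) metric" and x :: "real^'n"
  assumes g_invertible: "invertible (\<chi> a b. g x a b)"
begin

lemma ginv_right: "(\<Sum>m\<in>UNIV. g x l m * ginv g x m n) = (if l = n then 1 else 0)"
  using arg_cong[OF matrix_inv_mult(1)[OF g_invertible], of "\<lambda>M. M $ l $ n"]
  unfolding matrix_matrix_mult_def mat_def ginv_def by simp

lemma ginv_left: "(\<Sum>m\<in>UNIV. ginv g x l m * g x m n) = (if l = n then 1 else 0)"
  using arg_cong[OF matrix_inv_mult(2)[OF g_invertible], of "\<lambda>M. M $ l $ n"]
  unfolding matrix_matrix_mult_def mat_def ginv_def by simp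

lemma christoffel_lowered:
  assumes sym: "\<forall>a b. g x a b = g x b a"
  shows "(\<Sum>m\<in>UNIV. christoffel g x m j k * g x m l) =
     (pd (\<lambda>y. g y k l) j x + pd (\<lambda>y. g y j l) k x - pd (\<lambda>y. g y j k) l x) / 2"
proof -
  define D where "D n = pd (\<lambda>y. g y k n) j x + pd (\<lambda>y. g y j n) k x - pd (\<lambda>y. g y j k) n x" for n
  have "(\<Sum>m\<in>UNIV. christoffel g x m j k * g x m l) =
        (\<Sum>m\<in>UNIV. \<Sum>n\<in>UNIV. D n / 2 * (g x l m * ginv g x m n))"
    unfolding christoffel_def D_def sym[rule_format, of _ l]
    by (simp add: sum_distrib_left sum_distrib_right mult_ac)
  also have "\<dots> = (\<Sum>n\<in>UNIV. D n / 2 * (\<Sum>m\<in>UNIV. g x l m * ginv g x m n))"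
    by (subst sum.swap) (simp add: sum_distrib_left)
  also have "\<dots> = D l / 2"
    by (simp add: ginv_right if_distrib cong: if_cong)
  finally show ?thesis unfolding D_def .
qed

end

section \<open>Comoving coordinates\<close>

definition dtime :: "'a option \<Rightarrow> real" where
  "dtime k = (if k = None then 1 else 0)"

lemma dtime_simps [simp]: "dtime None = 1" "dtime (Some p) = 0"
  by (simp_all add: dtime_def)

lemma sum_option_UNIV: "(\<Sum>i\<in>(UNIV::'a::finite option set). f i) = f None + (\<Sum>p\<in>UNIV. f (Some p))"
  by (simp add: UNIV_option_conv sum.reindex)

lemma sum_dtime [simp]:
  fixes f :: "'a::finite option \<Rightarrow> real"
  shows "(\<Sum>l\<in>UNIV. dtime l * f l) = f None" "(\<Sum>l\<in>UNIV. f l * dtime l) = f None"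
  by (simp_all add: sum_option_UNIV)

lemma sum_dtime2 [simp]:
  fixes f :: "'a::finite option \<Rightarrow> 'b::finite option \<Rightarrow> real"
  shows "(\<Sum>j\<in>UNIV. \<Sum>k\<in>UNIV. f j k * (dtime j * dtime k)) = f None None"
proof -
  have "(\<Sum>k\<in>UNIV. f j k * (dtime j * dtime k)) = dtime j * f j None" for j
    by (cases j) (simp_all add: sum_option_UNIV)
  then show ?thesis by simp
qed

lemma tcoord_line: "tcoord (x + s *\<^sub>R axis i 1) = tcoord x + (if i = None then s else 0)"
  unfolding tcoord_def axis_def by auto

lemma spat_line_None: "spat (x + s *\<^sub>R axis None 1) = spat x"
  unfolding spat_def axis_def by (simp add: vec_eq_iff)

lemma has_pd_spat_None: "has_pd (\<lambda>y. f (spat y)) None x 0"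
  unfolding has_pd_def spat_line_None by simp

lemma spat_line_Some: "spat (x + s *\<^sub>R axis (Some p) 1) = spat x + s *\<^sub>R axis p 1"
  unfolding spat_def axis_def by (simp add: vec_eq_iff)

lemma has_pd_time:
  assumes "(F has_real_derivative F') (at (tcoord x))"
  shows "has_pd (\<lambda>y. F (tcoord y)) i x (F' * dtime i)"
proof (cases "i = None")
  case True
  have "((\<lambda>s. F (s + tcoord x)) has_real_derivative F') (at 0)"
    using assms DERIV_shift[of F F' 0 "tcoord x"] by simp
  with True show ?thesis unfolding has_pd_def tcoord_line by (simp add: add.commute)
next
  case False
  then have "(\<lambda>s. F (tcoord x + (if i = None then s else 0))) = (\<lambda>s. F (tcoord x))" by auto
  with False show ?thesis unfolding has_pd_def tcoord_line dtime_def by (simp only: if_False) simp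
qed

lemma grad_tcoord [simp]: "grad tcoord x k = dtime k"
  unfolding grad_def using pd_eqI[OF has_pd_time[of "\<lambda>t. t" 1 x k]] by simp

lemma open_frw_domain: "open I \<Longrightarrow> open U \<Longrightarrow> open (frw_domain I U)"
proof -
  assume "open I" "open U"
  have "frw_domain I U = tcoord -` I \<inter> spat -` U" unfolding frw_domain_def by auto
  moreover have "open (tcoord -` I)"
    unfolding tcoord_def using open_vimage_vec_nth[OF \<open>open I\<close>] .
  moreover have "open (spat -` U)"
    unfolding spat_def
    by (rule open_vimage[OF \<open>open U\<close>]) (intro continuous_on_vec_lambda continuous_intros)
  ultimately show ?thesis by auto
qed

lemma frw_metric_simps [simp]:
  "frw_metric a gs x None None = -1"
  "frw_metric a gs x None (Some q) = 0"
  "frw_metric a gs x (Some p) None = 0"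
  "frw_metric a gs x (Some p) (Some q) = (a (tcoord x))\<^sup>2 * gs (spat x) p q"
  by (simp_all add: frw_metric_def)

lemma frw_metric_None: "frw_metric a gs x k None = - dtime k" "frw_metric a gs x None k = - dtime k"
  by (cases k; simp)+

section \<open>Geometry of an FRW space-time\<close>

locale frw_spacetime =
  fixes I :: "real set" and U :: "(real^3) set" and a :: "real \<Rightarrow> real" and gs :: "3 metric"
  assumes I_open: "open I"
    and a_pos: "\<forall>t\<in>I. a t > 0"
    and a_smooth: "smooth_on_real I a"
    and gs: "const_curv_riemannian U gs"
begin

abbreviation "g\<^sub>F \<equiv> frw_metric a gs"
abbreviation "\<Omega>\<^sub>F \<equiv> frw_domain I U"

lemma U_open: "open U"
  using gs unfolding const_curv_riemannian_def by blast

lemma gs_sym: "y \<in> U \<Longrightarrow> gs y i j = gs y j i"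
  using gs unfolding const_curv_riemannian_def by blast

lemma gs_pos_def: "y \<in> U \<Longrightarrow> v \<noteq> 0 \<Longrightarrow> (\<Sum>i\<in>UNIV. \<Sum>j\<in>UNIV. gs y i j * v$i * v$j) > 0"
  using gs unfolding const_curv_riemannian_def by blast

lemma gs_differentiable: "y \<in> U \<Longrightarrow> (\<lambda>z. gs z i j) differentiable at y"
proof -
  assume y: "y \<in> U"
  have "pds [] (\<lambda>z. gs z i j) differentiable_on U"
    using gs unfolding const_curv_riemannian_def smooth_on_def by blast
  then show ?thesis
    using y U_open by (simp add: differentiable_on_eq_differentiable_at)
qed

lemma domain_open: "open \<Omega>\<^sub>F"
  using open_frw_domain[OF I_open U_open] .

lemma domain_tcoord: "x \<in> \<Omega>\<^sub>F \<Longrightarrow> tcoord x \<in> I"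
  and domain_spat: "x \<in> \<Omega>\<^sub>F \<Longrightarrow> spat x \<in> U"
  unfolding frw_domain_def by auto

lemma a_nonzero: "x \<in> \<Omega>\<^sub>F \<Longrightarrow> a (tcoord x) \<noteq> 0"
  using a_pos domain_tcoord by force

lemma metric_sym: "x \<in> \<Omega>\<^sub>F \<Longrightarrow> g\<^sub>F x k l = g\<^sub>F x l k"
  using gs_sym[OF domain_spat] by (cases k; cases l; simp)

lemma metric_invertible:
  assumes x: "x \<in> \<Omega>\<^sub>F"
  shows "invertible (\<chi> i j. g\<^sub>F x i j)"
  unfolding invertible_left_inverse matrix_left_invertible_ker
proof (intro allI impI)
  fix v :: "real^3 option"
  assume v: "(\<chi> i j. g\<^sub>F x i j) *v v = 0"
  have row: "(\<Sum>j\<in>UNIV. g\<^sub>F x i j * v$j) = 0" for i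
    using arg_cong[OF v, of "\<lambda>w. w $ i"] unfolding matrix_vector_mult_def by simp
  define w where "w = (\<chi> p. v $ Some p)"
  have v_None: "v $ None = 0"
    using row[of None] by (simp add: sum_option_UNIV)
  have "(\<Sum>p\<in>UNIV. (a (tcoord x))\<^sup>2 * (gs (spat x) q p * w$p)) = 0" for q
    using row[of "Some q"] unfolding w_def by (simp add: sum_option_UNIV mult.assoc)
  then have gs_w: "(\<Sum>p\<in>UNIV. gs (spat x) q p * w$p) = 0" for q
    using a_nonzero[OF x] by (simp add: sum_distrib_left[symmetric])
  have "(\<Sum>i\<in>UNIV. \<Sum>j\<in>UNIV. gs (spat x) i j * w$i * w$j)
      = (\<Sum>i\<in>UNIV. w$i * (\<Sum>j\<in>UNIV. gs (spat x) i j * w$j))"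
    by (simp add: sum_distrib_left mult_ac)
  also have "\<dots> = 0" using gs_w by simp
  finally have "w = 0" using gs_pos_def[OF domain_spat[OF x], of w] by fastforce
  then have "w $ p = 0" for p by simp
  then have v_Some: "v $ Some p = 0" for p unfolding w_def by simp
  show "v = 0"
    unfolding vec_eq_iff
  proof
    fix i show "v $ i = 0 $ i" using v_None v_Some by (cases i) auto
  qed
qed

lemma ginv_None:
  assumes x: "x \<in> \<Omega>\<^sub>F"
  shows "ginv g\<^sub>F x l None = - dtime l" "ginv g\<^sub>F x None l = - dtime l"
  using ginv_left[of g\<^sub>F x, OF metric_invertible[OF x], of l None] ginv_right[of g\<^sub>F x, OF metric_invertible[OF x], of None l]
  by (cases l; simp add: frw_metric_None sum_negf)+

lemma trace_metric:
  assumes x: "x \<in> \<Omega>\<^sub>F"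
  shows "(\<Sum>j\<in>UNIV. \<Sum>k\<in>UNIV. ginv g\<^sub>F x j k * g\<^sub>F x j k) = 4"
proof -
  have "(\<Sum>k\<in>UNIV. ginv g\<^sub>F x j k * g\<^sub>F x j k) = 1" for j
    using ginv_left[of g\<^sub>F x, OF metric_invertible[OF x], of j j] by (simp add: metric_sym[OF x, of j])
  then show ?thesis by (simp add: card_option)
qed

lemma a_DERIV:
  assumes "t \<in> I"
  shows "(a has_real_derivative deriv a t) (at t)"
    and "(deriv a has_real_derivative deriv (deriv a) t) (at t)"
    and "(deriv (deriv a) has_real_derivative deriv (deriv (deriv a)) t) (at t)"
  using smooth_on_real_DERIV[OF a_smooth I_open assms, of 0]
    smooth_on_real_DERIV[OF a_smooth I_open assms, of "Suc 0"]
    smooth_on_real_DERIV[OF a_smooth I_open assms, of "Suc (Suc 0)"]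
  by simp_all

lemma has_pd_metric_time:
  assumes x: "x \<in> \<Omega>\<^sub>F"
  shows "has_pd (\<lambda>y. g\<^sub>F y k l) None x (2 * hubble a (tcoord x) * (g\<^sub>F x k l + dtime k * dtime l))"
proof (cases "k = None \<or> l = None")
  case True
  then have "(\<lambda>y. g\<^sub>F y k l) = (\<lambda>y. - dtime k * dtime l)" "g\<^sub>F x k l + dtime k * dtime l = 0"
    by (auto simp: frw_metric_None)
  then show ?thesis using has_pd_const by simp
next
  case False
  then obtain p q where kl: "k = Some p" "l = Some q" by auto
  let ?t = "tcoord x"
  have "((\<lambda>t. (a t)\<^sup>2) has_real_derivative 2 * a ?t * deriv a ?t) (at ?t)"
    using DERIV_power[OF a_DERIV(1)[OF domain_tcoord[OF x]], of 2] by (simp add: mult_ac)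
  from has_pd_mult[OF has_pd_time[OF this] has_pd_spat_None[of "\<lambda>z. gs z p q"]]
  have "has_pd (\<lambda>y. g\<^sub>F y k l) None x (2 * a ?t * deriv a ?t * gs (spat x) p q)"
    using kl by simp
  then show ?thesis
    using kl a_nonzero[OF x] by (simp add: hubble_def field_simps power2_eq_square)
qed

lemma has_pd_metric_ex:
  assumes x: "x \<in> \<Omega>\<^sub>F"
  shows "\<exists>D. has_pd (\<lambda>y. g\<^sub>F y k l) j x D"
proof (cases "j = None \<or> k = None \<or> l = None")
  case True
  then show ?thesis
    using has_pd_metric_time[OF x, of k l] has_pd_const[of "- dtime k * dtime l" j x]
    by (auto simp: frw_metric_None)
next
  case False
  then obtain r p q where jkl: "j = Some r" "k = Some p" "l = Some q" by auto
  have "(\<lambda>s. spat x + s *\<^sub>R axis r 1) differentiable at 0"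
    by (intro derivative_intros)
  then have "(\<lambda>z. gs z p q) \<circ> (\<lambda>s. spat x + s *\<^sub>R axis r 1) differentiable at 0"
    by (rule differentiable_chain_at) (simp add: gs_differentiable domain_spat[OF x])
  then obtain D where "((\<lambda>s. gs (spat x + s *\<^sub>R axis r 1) p q) has_real_derivative D) (at 0)"
    unfolding o_def by (auto simp: DERIV_deriv_iff_real_differentiable[symmetric])
  from DERIV_cmult[OF this, of "(a (tcoord x))\<^sup>2"] show ?thesis
    unfolding has_pd_def jkl by (auto simp: tcoord_line spat_line_Some)
qed

lemma has_pd_metric: "x \<in> \<Omega>\<^sub>F \<Longrightarrow> has_pd (\<lambda>y. g\<^sub>F y k l) j x (pd (\<lambda>y. g\<^sub>F y k l) j x)"
  using has_pd_metric_ex pd_eqI by metis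

lemma pd_metric_sym: "x \<in> \<Omega>\<^sub>F \<Longrightarrow> pd (\<lambda>y. g\<^sub>F y l k) j x = pd (\<lambda>y. g\<^sub>F y k l) j x"
  by (rule pd_cong_open[OF domain_open]) (auto intro: metric_sym)

lemma christoffel_time:
  assumes x: "x \<in> \<Omega>\<^sub>F"
  shows "christoffel g\<^sub>F x None j k = hubble a (tcoord x) * (g\<^sub>F x j k + dtime j * dtime k)"
proof -
  have "christoffel g\<^sub>F x None j k = pd (\<lambda>y. g\<^sub>F y j k) None x / 2"
    unfolding christoffel_def using ginv_None(2)[OF x] by (simp add: frw_metric_None sum_negf)
  then show ?thesis using pd_eqI[OF has_pd_metric_time[OF x]] by simp
qed

lemma box_tcoord:
  assumes y: "y \<in> \<Omega>\<^sub>F"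
  shows "box g\<^sub>F tcoord y = -3 * hubble a (tcoord y)"
proof -
  let ?H = "hubble a (tcoord y)"
  have cov: "cov1 g\<^sub>F (grad tcoord) y j k = - (?H * (g\<^sub>F y j k + dtime j * dtime k))" for j k
    unfolding cov1_def using christoffel_time[OF y] by simp
  have "box g\<^sub>F tcoord y = (\<Sum>j\<in>UNIV. \<Sum>k\<in>UNIV.
      (- ?H) * (ginv g\<^sub>F y j k * g\<^sub>F y j k) + (- ?H) * (ginv g\<^sub>F y j k * (dtime j * dtime k)))"
    unfolding box_def cov by (simp add: algebra_simps)
  also have "\<dots> = (- ?H) * (\<Sum>j\<in>UNIV. \<Sum>k\<in>UNIV. ginv g\<^sub>F y j k * g\<^sub>F y j k)
      + (- ?H) * (\<Sum>j\<in>UNIV. \<Sum>k\<in>UNIV. ginv g\<^sub>F y j k * (dtime j * dtime k))"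
    by (simp only: sum.distrib sum_distrib_left)
  finally show ?thesis using trace_metric[OF y] ginv_None[OF y] by simp
qed

lemma hubble_DERIV:
  assumes t: "t \<in> I"
  shows "(hubble a has_real_derivative
           (deriv (deriv a) t * a t - deriv a t * deriv a t) / (a t * a t)) (at t)"
proof -
  have "hubble a = (\<lambda>t. deriv a t / a t)" by (rule ext) (simp add: hubble_def)
  moreover have "a t \<noteq> 0" using a_pos t by force
  ultimately show ?thesis using DERIV_divide[OF a_DERIV(2,1)[OF t]] by simp
qed

lemma deriv_hubble_DERIV:
  assumes t: "t \<in> I"
  shows "(deriv (hubble a) has_real_derivative deriv (deriv (hubble a)) t) (at t)"
proof -
  define E where "E s = (deriv (deriv a) s * a s - deriv a s * deriv a s) / (a s * a s)" for s
  have nz: "a t * a t \<noteq> 0" using a_pos t by force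
  note d = a_DERIV[OF t]
  from DERIV_divide[OF DERIV_diff[OF DERIV_mult[OF d(3,1)] DERIV_mult[OF d(2,2)]] DERIV_mult[OF d(1,1)] nz]
  obtain D where D: "(E has_real_derivative D) (at t)"
    unfolding E_def by blast
  have "\<forall>\<^sub>F s in nhds t. E s = deriv (hubble a) s"
    using eventually_nhds_in_open[OF I_open t]
    by (rule eventually_mono) (simp add: E_def DERIV_imp_deriv[OF hubble_DERIV])
  then have "(deriv (hubble a) has_real_derivative D) (at t)"
    using D DERIV_cong_ev[OF refl _ refl] by blast
  then show ?thesis using DERIV_imp_deriv by metis
qed

lemma grad_box_tcoord:
  assumes y: "y \<in> \<Omega>\<^sub>F"
  shows "grad (box g\<^sub>F tcoord) y p = -3 * deriv (hubble a) (tcoord y) * dtime p"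
proof -
  have "grad (box g\<^sub>F tcoord) y p = pd (\<lambda>z. -3 * hubble a (tcoord z)) p y"
    unfolding grad_def by (rule pd_cong_open[OF domain_open y]) (simp add: box_tcoord)
  also have "\<dots> = -3 * deriv (hubble a) (tcoord y) * dtime p"
    using hubble_DERIV[OF domain_tcoord[OF y]]
    by (intro pd_eqI has_pd_time DERIV_cmult) (simp add: DERIV_imp_deriv)
  finally show ?thesis .
qed

definition perfect_fluid :: "(real \<Rightarrow> real) \<Rightarrow> (real \<Rightarrow> real) \<Rightarrow> real^3 option \<Rightarrow> 3 option \<Rightarrow> 3 option \<Rightarrow> real"
  where "perfect_fluid A B y k l = A (tcoord y) * (dtime k * dtime l) + B (tcoord y) * g\<^sub>F y k l"

lemma mimetic_stress_perfect_fluid: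
  assumes y: "y \<in> \<Omega>\<^sub>F"
  shows "g\<^sub>F y k l * (V (tcoord y) + \<gamma> *
            (\<Sum>p\<in>UNIV. \<Sum>q\<in>UNIV. ginv g\<^sub>F y p q * grad (box g\<^sub>F tcoord) y p * grad tcoord y q))
         + 2 * \<zeta> (tcoord y) * grad tcoord y k * grad tcoord y l
         - \<gamma> * (grad tcoord y k * grad (box g\<^sub>F tcoord) y l + grad (box g\<^sub>F tcoord) y k * grad tcoord y l)
       = perfect_fluid (\<lambda>t. 2 * (\<zeta> t + 3 * \<gamma> * deriv (hubble a) t))
                       (\<lambda>t. V t + 3 * \<gamma> * deriv (hubble a) t) y k l"
proof -
  have "(\<Sum>p\<in>UNIV. \<Sum>q\<in>UNIV. ginv g\<^sub>F y p q * grad (box g\<^sub>F tcoord) y p * grad tcoord y q)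
      = 3 * deriv (hubble a) (tcoord y)"
    using ginv_None[OF y] by (simp add: grad_box_tcoord[OF y] sum_option_UNIV)
  then show ?thesis
    unfolding perfect_fluid_def grad_box_tcoord[OF y] by (simp add: algebra_simps)
qed

lemma trace_perfect_fluid:
  assumes x: "x \<in> \<Omega>\<^sub>F"
  shows "trace2 g\<^sub>F (perfect_fluid A B) x = - A (tcoord x) + 4 * B (tcoord x)"
proof -
  have "trace2 g\<^sub>F (perfect_fluid A B) x = A (tcoord x) * (\<Sum>j\<in>UNIV. \<Sum>k\<in>UNIV. ginv g\<^sub>F x j k * (dtime j * dtime k))
      + B (tcoord x) * (\<Sum>j\<in>UNIV. \<Sum>k\<in>UNIV. ginv g\<^sub>F x j k * g\<^sub>F x j k)"
    unfolding trace2_def perfect_fluid_def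
    by (simp add: sum_distrib_left sum.distrib algebra_simps)
  then show ?thesis using trace_metric[OF x] ginv_None[OF x] by simp
qed

lemma cov2_perfect_fluid:
  assumes x: "x \<in> \<Omega>\<^sub>F"
    and dA: "(A has_real_derivative A') (at (tcoord x))"
    and dB: "(B has_real_derivative B') (at (tcoord x))"
  shows "cov2 g\<^sub>F (perfect_fluid A B) x j k l = A' * dtime j * dtime k * dtime l + B' * dtime j * g\<^sub>F x k l
      - A (tcoord x) * hubble a (tcoord x) * ((g\<^sub>F x j k + dtime j * dtime k) * dtime l
                                            + dtime k * (g\<^sub>F x j l + dtime j * dtime l))"
proof -
  let ?t = "tcoord x"
  have lowered: "(\<Sum>m\<in>UNIV. christoffel g\<^sub>F x m i n * g\<^sub>F x m r) =
      (pd (\<lambda>y. g\<^sub>F y n r) i x + pd (\<lambda>y. g\<^sub>F y i r) n x - pd (\<lambda>y. g\<^sub>F y i n) r x) / 2" for i n r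
    using christoffel_lowered[of g\<^sub>F x, OF metric_invertible[OF x]] metric_sym[OF x] by blast
  have "pd (\<lambda>y. perfect_fluid A B y k l) j x
      = A' * dtime j * (dtime k * dtime l) + A ?t * 0 + (B' * dtime j * g\<^sub>F x k l + B ?t * pd (\<lambda>y. g\<^sub>F y k l) j x)"
    unfolding perfect_fluid_def
    by (intro pd_eqI has_pd_add has_pd_mult has_pd_time dA dB has_pd_const has_pd_metric x)
  moreover have "(\<Sum>m\<in>UNIV. christoffel g\<^sub>F x m j k * perfect_fluid A B x m l) =
      A ?t * dtime l * christoffel g\<^sub>F x None j k + B ?t * (\<Sum>m\<in>UNIV. christoffel g\<^sub>F x m j k * g\<^sub>F x m l)"
    unfolding perfect_fluid_def by (simp add: algebra_simps sum.distrib sum_distrib_left)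
  moreover have "(\<Sum>m\<in>UNIV. christoffel g\<^sub>F x m j l * perfect_fluid A B x k m) =
      A ?t * dtime k * christoffel g\<^sub>F x None j l + B ?t * (\<Sum>m\<in>UNIV. christoffel g\<^sub>F x m j l * g\<^sub>F x m k)"
    unfolding perfect_fluid_def metric_sym[OF x, of k]
    by (simp add: algebra_simps sum.distrib sum_distrib_left)
  ultimately show ?thesis
    unfolding cov2_def christoffel_time[OF x] lowered pd_metric_sym[OF x]
    by (simp add: field_simps)
qed

lemma div2_perfect_fluid_time:
  assumes x: "x \<in> \<Omega>\<^sub>F"
    and dA: "(A has_real_derivative A') (at (tcoord x))"
    and dB: "(B has_real_derivative B') (at (tcoord x))"
  shows "div2 g\<^sub>F (perfect_fluid A B) x None = - A' + B' - 3 * A (tcoord x) * hubble a (tcoord x)"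
proof -
  let ?c = "A' - B' - A (tcoord x) * hubble a (tcoord x)"
  let ?d = "A (tcoord x) * hubble a (tcoord x)"
  have cov: "cov2 g\<^sub>F (perfect_fluid A B) x j k None = ?c * (dtime j * dtime k) - ?d * g\<^sub>F x j k" for j k
    unfolding cov2_perfect_fluid[OF x dA dB] by (cases j; cases k) (simp_all add: algebra_simps)
  have "div2 g\<^sub>F (perfect_fluid A B) x None =
      ?c * (\<Sum>j\<in>UNIV. \<Sum>k\<in>UNIV. ginv g\<^sub>F x j k * (dtime j * dtime k))
      - ?d * (\<Sum>j\<in>UNIV. \<Sum>k\<in>UNIV. ginv g\<^sub>F x j k * g\<^sub>F x j k)"
    unfolding div2_def cov by (simp add: algebra_simps sum.distrib sum_subtractf sum_distrib_left)
  then show ?thesis using trace_metric[OF x] ginv_None[OF x] by simp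
qed

lemma codazzi_perfect_fluid:
  assumes dA: "\<And>t. t \<in> I \<Longrightarrow> (A has_real_derivative A' t) (at t)"
    and dB: "\<And>t. t \<in> I \<Longrightarrow> (B has_real_derivative B' t) (at t)"
    and B': "\<And>x. x \<in> \<Omega>\<^sub>F \<Longrightarrow> B' (tcoord x) = - A (tcoord x) * hubble a (tcoord x)"
  shows "codazzi_on \<Omega>\<^sub>F g\<^sub>F (perfect_fluid A B)"
  unfolding codazzi_on_def
proof (intro conjI ballI allI)
  fix x k l assume x: "x \<in> \<Omega>\<^sub>F"
  show "perfect_fluid A B x k l = perfect_fluid A B x l k"
    unfolding perfect_fluid_def using metric_sym[OF x, of k l] by simp
next
  fix x j k l assume x: "x \<in> \<Omega>\<^sub>F"
  note t = domain_tcoord[OF x]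
  show "cov2 g\<^sub>F (perfect_fluid A B) x j k l = cov2 g\<^sub>F (perfect_fluid A B) x k j l"
    unfolding cov2_perfect_fluid[OF x dA[OF t] dB[OF t]] B'[OF x]
    using metric_sym[OF x, of j k] by (simp add: algebra_simps)
qed

lemma codazzi_of_divergence_free_perfect_fluid:
  assumes dA: "\<And>t. t \<in> I \<Longrightarrow> (A has_real_derivative A' t) (at t)"
    and dB: "\<And>t. t \<in> I \<Longrightarrow> (B has_real_derivative B' t) (at t)"
    and div_free: "\<And>x. x \<in> \<Omega>\<^sub>F \<Longrightarrow> div2 g\<^sub>F (perfect_fluid A B) x None = 0"
  shows "codazzi_on \<Omega>\<^sub>F g\<^sub>F (perfect_fluid A (\<lambda>t. (A t - B t) / 3))"
proof (rule codazzi_perfect_fluid)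
  show "((\<lambda>t. (A t - B t) / 3) has_real_derivative (A' t - B' t) / 3) (at t)" if "t \<in> I" for t
    using that by (intro DERIV_cdivide DERIV_diff dA dB)
  show "(A' (tcoord x) - B' (tcoord x)) / 3 = - A (tcoord x) * hubble a (tcoord x)" if x: "x \<in> \<Omega>\<^sub>F" for x
    using div_free[OF x] div2_perfect_fluid_time[OF x dA dB, OF domain_tcoord[OF x] domain_tcoord[OF x]]
    by simp
qed (rule dA)

lemma perfect_fluid_trace_reversed:
  assumes "x \<in> \<Omega>\<^sub>F"
  shows "perfect_fluid A B x k l = perfect_fluid A (\<lambda>t. (A t - B t) / 3) x k l
           - g\<^sub>F x k l * trace2 g\<^sub>F (perfect_fluid A (\<lambda>t. (A t - B t) / 3)) x"
  unfolding trace_perfect_fluid[OF assms] perfect_fluid_def by (simp add: field_simps)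

end

theorem mainTheorem11:
  fixes I :: "real set" and U :: "(real^3) set"
    and a zeta V :: "real \<Rightarrow> real" and gs :: "3 metric" and gamma :: real
  defines "g \<equiv> frw_metric a gs"
    and "\<Omega> \<equiv> frw_domain I U"
    and "H \<equiv> hubble a"
    and "u \<equiv> (\<lambda>x k. - grad tcoord x k)"
    and "phi \<equiv> tcoord"
    and "chi \<equiv> box (frw_metric a gs) tcoord"
    and "X \<equiv> (\<lambda>x k l.
            frw_metric a gs x k l * (V (tcoord x) + gamma *
               (\<Sum>p\<in>UNIV. \<Sum>q\<in>UNIV. ginv (frw_metric a gs) x p q
                   * grad (box (frw_metric a gs) tcoord) x p * grad tcoord x q))
          + 2 * zeta (tcoord x) * grad tcoord x k * grad tcoord x l
          - gamma * (grad tcoord x k * grad (box (frw_metric a gs) tcoord) x l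
                     + grad (box (frw_metric a gs) tcoord) x k * grad tcoord x l))"
    and "C \<equiv> (\<lambda>x k l.
            2 * (zeta (tcoord x) + 3 * gamma * deriv (hubble a) (tcoord x))
              * (- grad tcoord x k) * (- grad tcoord x l)
          + (1/3) * (2 * zeta (tcoord x) - V (tcoord x) + 3 * gamma * deriv (hubble a) (tcoord x))
              * frw_metric a gs x k l)"
  assumes I: "open I" "is_interval I"
    and a_pos: "\<forall>t\<in>I. a t > 0"
    and a_smooth: "smooth_on_real I a"
    and zeta_smooth: "smooth_on_real I zeta"
    and V_smooth: "smooth_on_real I V"
    and gs: "const_curv_riemannian U gs"
    and divfree: "\<forall>x\<in>\<Omega>. \<forall>l. div2 g X x l = 0"
  shows "(\<forall>x\<in>\<Omega>. \<forall>k l. X x k l =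
            2 * (zeta (tcoord x) + 3 * gamma * deriv H (tcoord x)) * u x k * u x l
          + (V (tcoord x) + 3 * gamma * deriv H (tcoord x)) * g x k l)
       \<and> codazzi_on \<Omega> g C
       \<and> (\<forall>x\<in>\<Omega>. \<forall>k l. X x k l = C x k l - g x k l * trace2 g C x)
       \<and> (\<forall>T. (\<forall>x\<in>\<Omega>. \<forall>k l. einstein g x k l = T x k l + X x k l)
              \<longrightarrow> cotton_codazzi_form \<Omega> g T)"
proof -
  interpret frw_spacetime I U a gs using I(1) a_pos a_smooth gs by unfold_locales
  define A where "A t = 2 * (zeta t + 3 * gamma * deriv H t)" for t
  define B where "B t = V t + 3 * gamma * deriv H t" for t
  have X_fluid: "X y = perfect_fluid A B y" if "y \<in> \<Omega>" for y
    using mimetic_stress_perfect_fluid[of y] that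
    unfolding X_def A_def[abs_def] B_def[abs_def] H_def \<Omega>_def by (simp add: fun_eq_iff)
  have C_fluid: "C = perfect_fluid A (\<lambda>t. (A t - B t) / 3)"
    unfolding C_def A_def B_def H_def perfect_fluid_def by (simp add: fun_eq_iff field_simps)
  have dA: "(A has_real_derivative 2 * (deriv zeta t + 3 * gamma * deriv (deriv H) t)) (at t)"
    and dB: "(B has_real_derivative deriv V t + 3 * gamma * deriv (deriv H) t) (at t)" if "t \<in> I" for t
  proof -
    have "(zeta has_real_derivative deriv zeta t) (at t)" "(V has_real_derivative deriv V t) (at t)"
      using smooth_on_real_DERIV[OF zeta_smooth I(1) that, of 0]
        smooth_on_real_DERIV[OF V_smooth I(1) that, of 0] by simp_all
    with deriv_hubble_DERIV[OF that, folded H_def]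
    show "(A has_real_derivative 2 * (deriv zeta t + 3 * gamma * deriv (deriv H) t)) (at t)"
      and "(B has_real_derivative deriv V t + 3 * gamma * deriv (deriv H) t) (at t)"
      unfolding A_def[abs_def] B_def[abs_def] by (auto intro!: DERIV_cmult DERIV_add)
  qed
  have "div2 g\<^sub>F (perfect_fluid A B) x None = 0" if "x \<in> \<Omega>\<^sub>F" for x
    using divfree that div2_cong_open[OF domain_open, of x "perfect_fluid A B" X] X_fluid
    unfolding g_def \<Omega>_def by auto
  from codazzi_of_divergence_free_perfect_fluid[OF dA dB this]
  have codazzi: "codazzi_on \<Omega> g C"
    unfolding C_fluid g_def \<Omega>_def .
  have trace_reversed: "\<forall>x\<in>\<Omega>. \<forall>k l. X x k l = C x k l - g x k l * trace2 g C x"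
    using X_fluid perfect_fluid_trace_reversed[of _ A B] unfolding C_fluid g_def \<Omega>_def by simp
  have "\<forall>x\<in>\<Omega>. \<forall>k l. X x k l = 2 * (zeta (tcoord x) + 3 * gamma * deriv H (tcoord x)) * u x k * u x l
      + (V (tcoord x) + 3 * gamma * deriv H (tcoord x)) * g x k l"
    using X_fluid unfolding perfect_fluid_def A_def B_def u_def g_def by simp
  moreover have "cotton_codazzi_form \<Omega> g T"
    if "\<forall>x\<in>\<Omega>. \<forall>k l. einstein g x k l = T x k l + X x k l" for T
    unfolding cotton_codazzi_form_def using codazzi trace_reversed that by auto
  ultimately show ?thesis using codazzi trace_reversed by blast
qed

end
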